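(* For integers $1\le i<r$, \[ C_{i+1,r}=C_{i,r}+\sum_{k=r-i+1}^{r-1}C_{r-i+1,k}\,C_{r-k,r-k}-\sum_{k=i}^{r-1}C_{i,k}\,C_{r-k,r-k}, \] with initial values $C_{1,r}=(-1)^r/(r+1)$ for $r\ge1$.
   Context: Bernoulli numbers $B_n$ are defined by $\sum_{n\ge0}B_n x^n/n! = xe^x/(e^x-1)$. For a finite set $S\subset\mathbb Z_{\ge0}^r$, $C(S)=(-1)^r\sum_{(n_1,\dots,n_r)\in S}\prod_{j}B_{n_j}/n_j!$. For $1\le i\le r$, $C_{i,r}=C(S)$ where $S$ is the set of $(n_1,\dots,n_r)\in\mathbb Z_{\ge0}^r$ with $n_1+\dots+n_r=r$, $n_1+\dots+n_j<j$ for $1\le j<i$, and $n_{j+1}+\dots+n_r\le r-j$ for $i\le j<r$. (These are the coefficients $C^{(1,\dots,1,0,\dots,0)}$ with $i-1$ ones and $r-i$ zeros of the asymptotic expansion of the Euler–Zagier multiple zeta function at the origin.) *)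

theory Defs
  imports Complex_Main "HOL-Computational_Algebra.Formal_Power_Series"
begin

text \<open>Bernoulli numbers with the convention  x e^x / (e^x - 1) = sum B_n x^n / n!
  (so B_1 = +1/2), defined as coefficients of the formal power series.\<close>
definition bernoulli_gf :: "real fps" where
  "bernoulli_gf = fps_X * fps_exp 1 / (fps_exp 1 - 1)"

definition bern :: "nat \<Rightarrow> real" where
  "bern n = fact n * fps_nth bernoulli_gf n"

text \<open>Tuples (n_1,...,n_r) are functions nat => nat supported on {1..r}.
  C(S) = (-1)^r * sum over S of prod_j B_{n_j}/n_j!.\<close>
definition Cset :: "nat \<Rightarrow> (nat \<Rightarrow> nat) set \<Rightarrow> real" where
  "Cset r S = (-1) ^ r * (\<Sum>n\<in>S. \<Prod>j=1..r. bern (n j) / fact (n j))"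

definition Sidx :: "nat \<Rightarrow> nat \<Rightarrow> (nat \<Rightarrow> nat) set" where
  "Sidx i r = {n. (\<forall>j. j \<notin> {1..r} \<longrightarrow> n j = 0)
      \<and> (\<Sum>j=1..r. n j) = r
      \<and> (\<forall>j. 1 \<le> j \<and> j < i \<longrightarrow> (\<Sum>l=1..j. n l) < j)
      \<and> (\<forall>j. i \<le> j \<and> j < r \<longrightarrow> (\<Sum>l=j+1..r. n l) \<le> r - j)}"

definition Ccoef :: "nat \<Rightarrow> nat \<Rightarrow> real" where
  "Ccoef i r = Cset r (Sidx i r)"

end

theory Submission
  imports Defs
begin

text \<open>
  Let \<open>L = -log (1 - x)\<close> and \<open>D = L / x\<close>; the Bernoulli generating function
  \<open>\<phi>(x) = x e^x / (e^x - 1)\<close> satisfies \<open>\<phi>(L) = D\<close>. Weight a tuple by \<open>\<Prod> B(n_j) / n_j!\<close> and read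
  it as the path of its partial sums. A first-step decomposition shows that the tuples whose path
  stays strictly below the diagonal are counted by coefficients of powers of \<open>L\<close>, and those that
  start at height \<open>h\<close> and stay weakly above it by coefficients of \<open>L^h D\<close>. Cutting an admissible
  tuple at position \<open>i\<close> therefore exhibits \<open>(-1)^r C(i,r)\<close> as the coefficient of
  \<open>u^(i-1) t^(r-i+1)\<close> in a bivariate series \<open>K(u, t)\<close>, and a telescoping sum gives
  \<open>K(u, t) (L(u) - L(t)) = t D(t) (D(u) - D(t))\<close>. Writing \<open>D = 1 / (1 - E)\<close>, this functional
  equation and the symmetry of \<open>K\<close> it implies, read coefficientwise, give the recursion; the
  initial values are the coefficients of \<open>D\<close>.
\<close>

unbundle fps_syntax

subsection \<open>The series \<open>L\<close> and \<open>D\<close>\<close>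

definition L_fps :: "real fps" where
  "L_fps = Abs_fps (\<lambda>n. if n = 0 then 0 else 1 / real n)"

definition D_fps :: "real fps" where
  "D_fps = Abs_fps (\<lambda>n. 1 / (real n + 1))"

lemma L_fps_eq: "L_fps = fps_X * D_fps"
  by (auto simp: fps_eq_iff L_fps_def D_fps_def of_nat_diff)

lemma L_fps_nth_0 [simp]: "L_fps $ 0 = 0"
  by (simp add: L_fps_def)

lemma D_fps_nth_0 [simp]: "D_fps $ 0 = 1"
  by (simp add: D_fps_def)

lemma bern_div_fact: "bern n / fact n = bernoulli_gf $ n"
  by (simp add: bern_def)

lemma bernoulli_gf_mult: "bernoulli_gf * (fps_exp 1 - 1) = fps_X * fps_exp 1"
proof -
  have "subdegree (fps_exp (1::real) - 1) = 1"
    by (rule subdegreeI) auto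
  moreover have "subdegree (fps_X * fps_exp (1::real)) = 1"
    by (rule subdegreeI) auto
  moreover have "fps_exp (1::real) - 1 \<noteq> 0"
  proof
    assume "fps_exp (1::real) - 1 = 0"
    then have "(fps_exp (1::real) - 1) $ 1 = 0"
      by simp
    then show False
      by simp
  qed
  ultimately show ?thesis
    unfolding bernoulli_gf_def by (intro fps_times_divide_eq) auto
qed

lemma bernoulli_gf_nth_0 [simp]: "bernoulli_gf $ 0 = 1"
proof -
  have "(bernoulli_gf * (fps_exp 1 - 1)) $ 1 = (fps_X * fps_exp (1::real)) $ 1"
    by (simp add: bernoulli_gf_mult)
  then show ?thesis
    by (simp add: fps_mult_nth_1)
qed

lemma fps_deriv_L_fps: "fps_deriv L_fps * (1 - fps_X) = 1"
proof -
  have "fps_deriv L_fps = Abs_fps (\<lambda>n. 1)"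
    by (simp add: fps_eq_iff L_fps_def fps_deriv_def del: of_nat_Suc)
  moreover have "Abs_fps (\<lambda>n. 1::real) * (1 - fps_X) = 1"
    by (simp add: fps_eq_iff right_diff_distrib)
  ultimately show ?thesis
    by simp
qed

lemma fps_exp_compose_L_fps: "(fps_exp 1 oo L_fps) * (1 - fps_X) = 1"
proof -
  define G where "G = fps_exp (1::real) oo L_fps"
  have "fps_deriv (G * (1 - fps_X)) = G * (fps_deriv L_fps * (1 - fps_X)) - G"
    by (simp add: G_def fps_compose_deriv fps_deriv_mult algebra_simps)
  then have "fps_deriv (G * (1 - fps_X)) = 0"
    by (simp add: fps_deriv_L_fps)
  then have "G * (1 - fps_X) = fps_const ((G * (1 - fps_X)) $ 0)"
    using fps_deriv_eq_0_iff by blast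
  then show ?thesis
    by (simp add: G_def)
qed

lemma bernoulli_gf_compose_L_fps: "bernoulli_gf oo L_fps = D_fps"
proof -
  define G where "G = fps_exp (1::real) oo L_fps"
  have G: "G * (1 - fps_X) = 1"
    using fps_exp_compose_L_fps by (simp add: G_def)
  have "(bernoulli_gf * (fps_exp 1 - 1)) oo L_fps = (fps_X * fps_exp 1) oo L_fps"
    by (simp add: bernoulli_gf_mult)
  then have "(bernoulli_gf oo L_fps) * (G - 1) = L_fps * G"
    by (simp add: fps_compose_mult_distrib fps_compose_sub_distrib G_def)
  then have "(bernoulli_gf oo L_fps) * (G * (1 - fps_X) - (1 - fps_X)) = L_fps * (G * (1 - fps_X))"
    by (metis (no_types, lifting) mult.assoc left_diff_distrib mult_1_left)
  then have "fps_X * (bernoulli_gf oo L_fps) = fps_X * D_fps"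
    by (simp add: G L_fps_eq mult.commute)
  then show ?thesis
    by simp
qed

lemma fps_compose_mult_nth:
  fixes a F B :: "'a::comm_ring_1 fps"
  assumes "F $ 0 = 0"
  shows "((a oo F) * B) $ n = (\<Sum>k=0..n. a $ k * (F ^ k * B) $ n)"
proof -
  have below: "(F ^ k) $ i = 0" if "i < k" for k i
    using startsby_zero_power_prefix[OF assms] that by blast
  have "((a oo F) * B) $ n = (\<Sum>i=0..n. (\<Sum>k=0..i. a $ k * (F ^ k) $ i) * B $ (n - i))"
    by (simp add: fps_mult_nth fps_compose_nth)
  also have "\<dots> = (\<Sum>i=0..n. (\<Sum>k=0..n. a $ k * (F ^ k) $ i) * B $ (n - i))"
  proof (intro sum.cong refl)
    fix i assume "i \<in> {0..n}"
    then have "(\<Sum>k=0..i. a $ k * (F ^ k) $ i) = (\<Sum>k=0..n. a $ k * (F ^ k) $ i)"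
      by (intro sum.mono_neutral_left) (auto simp: below)
    then show "(\<Sum>k=0..i. a $ k * (F ^ k) $ i) * B $ (n - i) = (\<Sum>k=0..n. a $ k * (F ^ k) $ i) * B $ (n - i)"
      by simp
  qed
  also have "\<dots> = (\<Sum>k=0..n. a $ k * (\<Sum>i=0..n. (F ^ k) $ i * B $ (n - i)))"
    by (simp add: sum_distrib_left sum_distrib_right mult.assoc) (rule sum.swap)
  finally show ?thesis
    by (simp add: fps_mult_nth)
qed

definition bcoef :: "nat \<Rightarrow> real" where
  "bcoef n = bernoulli_gf $ n"

definition alpha :: "nat \<Rightarrow> nat \<Rightarrow> real" where
  "alpha p g = (L_fps ^ g) $ p"

definition beta :: "nat \<Rightarrow> nat \<Rightarrow> real" where
  "beta q h = (L_fps ^ h * D_fps) $ q"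

lemma L_fps_power_nth_below: "p < g \<Longrightarrow> (L_fps ^ g) $ p = 0"
  using startsby_zero_power_prefix[of L_fps g] by simp

lemma alpha_below: "p < g \<Longrightarrow> alpha p g = 0"
  by (simp add: alpha_def L_fps_power_nth_below)

lemma beta_below: "q < h \<Longrightarrow> beta q h = 0"
  by (simp add: beta_def fps_mult_nth L_fps_power_nth_below)

lemma L_fps_power_Suc: "L_fps ^ Suc g = fps_X * (D_fps * L_fps ^ g)"
  by (simp add: L_fps_eq mult.assoc)

lemma beta_Suc:
  assumes "q + 1 \<le> M"
  shows "beta (Suc q) h = (\<Sum>n=0..M. bcoef n * (if 1 \<le> h + n then beta q (h + n - 1) else 0))"
proof -
  have "beta (Suc q) h = (\<Sum>n=0..Suc q. bcoef n * (if 1 \<le> h + n then beta q (h + n - 1) else 0))"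
  proof (cases h)
    case 0
    have "beta (Suc q) 0 = (\<Sum>n=0..Suc q. bcoef n * (L_fps ^ n) $ Suc q)"
      by (simp add: beta_def bernoulli_gf_compose_L_fps[symmetric] fps_compose_nth bcoef_def)
    also have "\<dots> = (\<Sum>n=0..Suc q. bcoef n * (if 1 \<le> 0 + n then beta q (0 + n - 1) else 0))"
    proof (intro sum.cong refl)
      fix n
      show "bcoef n * (L_fps ^ n) $ Suc q = bcoef n * (if 1 \<le> 0 + n then beta q (0 + n - 1) else 0)"
        by (cases n) (simp_all add: L_fps_power_Suc beta_def mult.commute del: power_Suc)
    qed
    finally show ?thesis
      unfolding 0 .
  next
    case (Suc g)
    have "beta (Suc q) h = ((bernoulli_gf oo L_fps) * (L_fps ^ g * D_fps)) $ q"
      by (simp add: Suc beta_def L_fps_power_Suc bernoulli_gf_compose_L_fps mult.assoc del: power_Suc)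
    also have "\<dots> = (\<Sum>n=0..q. bcoef n * (L_fps ^ n * (L_fps ^ g * D_fps)) $ q)"
      by (simp add: fps_compose_mult_nth bcoef_def)
    also have "\<dots> = (\<Sum>n=0..q. bcoef n * beta q (h + n - 1))"
      by (simp add: Suc beta_def power_add mult_ac)
    also have "\<dots> = (\<Sum>n=0..Suc q. bcoef n * (if 1 \<le> h + n then beta q (h + n - 1) else 0))"
      by (simp add: Suc beta_below)
    finally show ?thesis .
  qed
  also have "\<dots> = (\<Sum>n=0..M. bcoef n * (if 1 \<le> h + n then beta q (h + n - 1) else 0))"
    using assms by (intro sum.mono_neutral_left) (auto simp: beta_below)
  finally show ?thesis .
qed

definition alpha_rev :: "nat \<Rightarrow> nat \<Rightarrow> real" where
  "alpha_rev p s = (if s \<le> p then alpha p (p - s) else 0)"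

lemma alpha_rev_Suc:
  assumes "p + 1 \<le> M"
  shows "alpha_rev (Suc p) s =
    (if s < Suc p then (\<Sum>n=0..M. bcoef n * (if n \<le> s then alpha_rev p (s - n) else 0)) else 0)"
proof (cases "s < Suc p")
  case True
  define g where "g = p - s"
  have "alpha_rev (Suc p) s = ((bernoulli_gf oo L_fps) * L_fps ^ g) $ p"
    using True by (simp add: alpha_rev_def alpha_def g_def Suc_diff_le L_fps_power_Suc
        bernoulli_gf_compose_L_fps del: power_Suc)
  also have "\<dots> = (\<Sum>n=0..p. bcoef n * alpha p (n + g))"
    by (simp add: fps_compose_mult_nth bcoef_def alpha_def power_add)
  also have "\<dots> = (\<Sum>n=0..s. bcoef n * alpha p (n + g))"
    using True by (intro sum.mono_neutral_right) (auto simp: alpha_below g_def)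
  also have "\<dots> = (\<Sum>n=0..M. bcoef n * (if n \<le> s then alpha_rev p (s - n) else 0))"
    using True assms
    by (intro sum.mono_neutral_cong_left) (auto simp: alpha_rev_def g_def add.commute)
  finally show ?thesis
    using True by simp
qed (auto simp: alpha_rev_def alpha_def)

subsection \<open>Weighted lattice paths\<close>

definition blists :: "nat \<Rightarrow> nat \<Rightarrow> nat list set" where
  "blists M m = {xs. set xs \<subseteq> {0..M} \<and> length xs = m}"

lemma finite_blists [simp]: "finite (blists M m)"
  unfolding blists_def by (rule finite_lists_length_eq) simp

lemma blists_0 [simp]: "blists M 0 = {[]}"
  by (auto simp: blists_def)

lemma sum_blists_append_Cons:
  "(\<Sum>xs\<in>blists M (a + Suc c). f xs) =
    (\<Sum>ys\<in>blists M a. \<Sum>n=0..M. \<Sum>zs\<in>blists M c. f (ys @ n # zs))"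
proof -
  have "(\<Sum>xs\<in>blists M (a + Suc c). f xs) =
      (\<Sum>(ys, n, zs)\<in>blists M a \<times> {0..M} \<times> blists M c. f (ys @ n # zs))"
  proof (rule sum.reindex_bij_witness[where i = "\<lambda>(ys, n, zs). ys @ n # zs"
        and j = "\<lambda>xs. (take a xs, xs ! a, drop (Suc a) xs)"])
    fix xs assume xs: "xs \<in> blists M (a + Suc c)"
    then have a: "a < length xs" and set: "set xs \<subseteq> {0..M}"
      by (auto simp: blists_def)
    show "(case (take a xs, xs ! a, drop (Suc a) xs) of (ys, n, zs) \<Rightarrow> ys @ n # zs) = xs"
      using id_take_nth_drop[OF a] by simp
    have "set (take a xs) \<subseteq> {0..M}" "set (drop (Suc a) xs) \<subseteq> {0..M}" "xs ! a \<in> {0..M}"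
      using set set_take_subset[of a xs] set_drop_subset[of "Suc a" xs] nth_mem[OF a] by auto
    then show "(take a xs, xs ! a, drop (Suc a) xs) \<in> blists M a \<times> {0..M} \<times> blists M c"
      using xs by (simp add: blists_def)
  next
    fix b assume "b \<in> blists M a \<times> {0..M} \<times> blists M c"
    then obtain ys n zs where b: "b = (ys, n, zs)" and ys: "ys \<in> blists M a"
      and n: "n \<in> {0..M}" and zs: "zs \<in> blists M c"
      by auto
    then have len: "length ys = a"
      by (simp add: blists_def)
    show "(take a (case b of (ys, n, zs) \<Rightarrow> ys @ n # zs),
        (case b of (ys, n, zs) \<Rightarrow> ys @ n # zs) ! a,
        drop (Suc a) (case b of (ys, n, zs) \<Rightarrow> ys @ n # zs)) = b"
      using b len by (simp add: nth_append)
    show "(case b of (ys, n, zs) \<Rightarrow> ys @ n # zs) \<in> blists M (a + Suc c)"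
      using b ys n zs by (auto simp: blists_def)
  next
    fix xs assume "xs \<in> blists M (a + Suc c)"
    then have "a < length xs"
      by (simp add: blists_def)
    then show "(case (take a xs, xs ! a, drop (Suc a) xs) of (ys, n, zs) \<Rightarrow> f (ys @ n # zs)) = f xs"
      using id_take_nth_drop by fastforce
  qed
  then show ?thesis
    by (simp add: sum.cartesian_product')
qed

lemma sum_blists_Cons:
  "(\<Sum>xs\<in>blists M (Suc c). f xs) = (\<Sum>n=0..M. \<Sum>zs\<in>blists M c. f (n # zs))"
  using sum_blists_append_Cons[where a = 0] by simp

lemma sum_blists_snoc:
  "(\<Sum>xs\<in>blists M (Suc a). f xs) = (\<Sum>ys\<in>blists M a. \<Sum>n=0..M. f (ys @ [n]))"
  using sum_blists_append_Cons[where c = 0] by simp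

definition weight :: "nat list \<Rightarrow> real" where
  "weight xs = prod_list (map bcoef xs)"

lemma weight_simps [simp]:
  "weight [] = 1" "weight (n # xs) = bcoef n * weight xs" "weight (xs @ ys) = weight xs * weight ys"
  by (simp_all add: weight_def)

definition below_diag :: "nat list \<Rightarrow> bool" where
  "below_diag ys \<longleftrightarrow> (\<forall>j. 1 \<le> j \<and> j \<le> length ys \<longrightarrow> sum_list (take j ys) < j)"

definition above_diag :: "nat \<Rightarrow> nat list \<Rightarrow> bool" where
  "above_diag h zs \<longleftrightarrow> h + sum_list zs = length zs
     \<and> (\<forall>j. j \<le> length zs \<longrightarrow> j \<le> h + sum_list (take j zs))"

lemma below_diag_Nil [simp]: "below_diag []"
  by (simp add: below_diag_def)

lemma below_diag_sum_list_le:
  assumes "below_diag ys"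
  shows "sum_list ys \<le> length ys"
proof (cases ys)
  case (Cons y ys')
  then show ?thesis
    using assms[unfolded below_diag_def, rule_format, of "length ys"] by simp
qed simp

lemma below_diag_snoc:
  "below_diag (ys @ [n]) \<longleftrightarrow> below_diag ys \<and> sum_list ys + n < Suc (length ys)"
proof -
  have "(\<forall>j. 1 \<le> j \<and> j \<le> Suc (length ys) \<longrightarrow> P j) \<longleftrightarrow>
      (\<forall>j. 1 \<le> j \<and> j \<le> length ys \<longrightarrow> P j) \<and> P (Suc (length ys))" for P
    by (auto simp: le_Suc_eq)
  moreover have "take j (ys @ [n]) = take j ys" if "j \<le> length ys" for j
    using that by simp
  ultimately show ?thesis
    unfolding below_diag_def by (simp cong: imp_cong)
qed

lemma above_diag_Nil [simp]: "above_diag h [] \<longleftrightarrow> h = 0"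
  by (simp add: above_diag_def)

lemma above_diag_Cons: "above_diag h (n # zs) \<longleftrightarrow> 1 \<le> h + n \<and> above_diag (h + n - 1) zs"
proof
  assume H: "above_diag h (n # zs)"
  have tot: "h + n + sum_list zs = Suc (length zs)"
    using H by (simp add: above_diag_def)
  have Suc_le: "Suc j \<le> h + n + sum_list (take j zs)" if "j \<le> length zs" for j
    using H[unfolded above_diag_def, THEN conjunct2, rule_format, of "Suc j"] that by simp
  from Suc_le[of 0] have "1 \<le> h + n"
    by simp
  moreover have "above_diag (h + n - 1) zs"
    unfolding above_diag_def using tot Suc_le \<open>1 \<le> h + n\<close> by fastforce
  ultimately show "1 \<le> h + n \<and> above_diag (h + n - 1) zs" ..
next
  assume H: "1 \<le> h + n \<and> above_diag (h + n - 1) zs"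
  then have "1 \<le> h + n" and "h + n - 1 + sum_list zs = length zs"
    by (simp_all add: above_diag_def)
  then have tot: "h + sum_list (n # zs) = length (n # zs)"
    by simp
  have "j \<le> h + sum_list (take j (n # zs))" if "j \<le> length (n # zs)" for j
  proof (cases j)
    case (Suc j')
    then have "j' \<le> length zs"
      using that by simp
    then have "j' \<le> h + n - 1 + sum_list (take j' zs)"
      using H unfolding above_diag_def by blast
    then show ?thesis
      using Suc \<open>1 \<le> h + n\<close> by simp
  qed simp
  then show "above_diag h (n # zs)"
    using tot by (simp add: above_diag_def)
qed

definition below_diag_sum :: "nat \<Rightarrow> nat \<Rightarrow> nat \<Rightarrow> real" where
  "below_diag_sum M p s =
    (\<Sum>ys\<in>blists M p. if below_diag ys \<and> sum_list ys = s then weight ys else 0)"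

definition above_diag_sum :: "nat \<Rightarrow> nat \<Rightarrow> nat \<Rightarrow> real" where
  "above_diag_sum M q h = (\<Sum>zs\<in>blists M q. if above_diag h zs then weight zs else 0)"

lemma above_diag_sum_Suc:
  "above_diag_sum M (Suc q) h =
    (\<Sum>n=0..M. bcoef n * (if 1 \<le> h + n then above_diag_sum M q (h + n - 1) else 0))"
  unfolding above_diag_sum_def sum_blists_Cons
proof (intro sum.cong refl)
  fix n
  show "(\<Sum>zs\<in>blists M q. if above_diag h (n # zs) then weight (n # zs) else 0) =
      bcoef n * (if 1 \<le> h + n
        then \<Sum>zs\<in>blists M q. if above_diag (h + n - 1) zs then weight zs else 0 else 0)"
  proof (cases "1 \<le> h + n")
    case True
    then show ?thesis
      by (simp add: above_diag_Cons sum_distrib_left if_distrib[of "(*) (bcoef n)"] cong: if_cong)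
  qed (simp add: above_diag_Cons)
qed

lemma above_diag_sum_eq_beta: "q \<le> M \<Longrightarrow> above_diag_sum M q h = beta q h"
proof (induction q arbitrary: h)
  case 0
  then show ?case
    by (cases h) (simp_all add: above_diag_sum_def beta_def)
next
  case (Suc q)
  then show ?case
    by (simp add: above_diag_sum_Suc beta_Suc cong: if_cong)
qed

lemma below_diag_sum_Suc:
  "below_diag_sum M (Suc p) s = (if s < Suc p
     then (\<Sum>n=0..M. bcoef n * (if n \<le> s then below_diag_sum M p (s - n) else 0)) else 0)"
proof -
  have "below_diag_sum M (Suc p) s = (\<Sum>ys\<in>blists M p. \<Sum>n=0..M.
      if s < Suc p \<and> n \<le> s then bcoef n * (if below_diag ys \<and> sum_list ys = s - n then weight ys else 0)
      else 0)"
    unfolding below_diag_sum_def sum_blists_snoc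
    by (intro sum.cong refl) (auto simp: below_diag_snoc blists_def mult.commute)
  also have "\<dots> = (\<Sum>n=0..M. \<Sum>ys\<in>blists M p.
      if s < Suc p \<and> n \<le> s then bcoef n * (if below_diag ys \<and> sum_list ys = s - n then weight ys else 0)
      else 0)"
    by (rule sum.swap)
  also have "\<dots> = (if s < Suc p
      then (\<Sum>n=0..M. bcoef n * (if n \<le> s then below_diag_sum M p (s - n) else 0)) else 0)"
  proof (cases "s < Suc p")
    case True
    have "(\<Sum>ys\<in>blists M p. if n \<le> s
        then bcoef n * (if below_diag ys \<and> sum_list ys = s - n then weight ys else 0) else 0) =
      bcoef n * (if n \<le> s then below_diag_sum M p (s - n) else 0)" for n
      by (cases "n \<le> s") (simp_all add: below_diag_sum_def sum_distrib_left)
    then show ?thesis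
      using True by simp
  qed simp
  finally show ?thesis .
qed

lemma below_diag_sum_eq_alpha_rev: "p \<le> M \<Longrightarrow> below_diag_sum M p s = alpha_rev p s"
proof (induction p arbitrary: s)
  case 0
  then show ?case
    by (simp add: below_diag_sum_def alpha_rev_def alpha_def)
next
  case (Suc p)
  then show ?case
    by (simp add: below_diag_sum_Suc alpha_rev_Suc cong: if_cong)
qed

subsection \<open>Cutting an admissible tuple\<close>

definition admissible :: "nat \<Rightarrow> nat \<Rightarrow> nat list \<Rightarrow> bool" where
  "admissible i r xs \<longleftrightarrow> sum_list xs = r
     \<and> (\<forall>j. 1 \<le> j \<and> j < i \<longrightarrow> sum_list (take j xs) < j)
     \<and> (\<forall>j. i \<le> j \<and> j < r \<longrightarrow> j \<le> sum_list (take j xs))"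

lemma sum_list_take_append_Cons:
  "sum_list (take j (ys @ n # zs)) = (if j \<le> length ys then sum_list (take j ys)
     else sum_list ys + n + sum_list (take (j - Suc (length ys)) zs))"
  by (cases "j \<le> length ys") (auto simp: not_le Suc_le_eq take_Cons' add.assoc)

lemma above_diag_shift_iff:
  "S + sum_list zs = i + length zs \<and> (\<forall>k < length zs. i + k \<le> S + sum_list (take k zs))
    \<longleftrightarrow> i \<le> S \<and> above_diag (S - i) zs"
proof
  assume H: "S + sum_list zs = i + length zs \<and> (\<forall>k < length zs. i + k \<le> S + sum_list (take k zs))"
  have "i \<le> S"
  proof (cases zs)
    case Nil
    then show ?thesis
      using H by simp
  next
    case (Cons z zs')
    then show ?thesis
      using H[THEN conjunct2, rule_format, of 0] by simp
  qed
  moreover have "k \<le> S - i + sum_list (take k zs)" if "k \<le> length zs" for k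
    using H \<open>i \<le> S\<close> that by (cases "k = length zs") (auto dest: spec[of _ k])
  ultimately show "i \<le> S \<and> above_diag (S - i) zs"
    using H by (simp add: above_diag_def)
next
  assume H: "i \<le> S \<and> above_diag (S - i) zs"
  then have bound: "k \<le> S - i + sum_list (take k zs)" if "k \<le> length zs" for k
    using that unfolding above_diag_def by blast
  have "S - i + sum_list zs = length zs" and "i \<le> S"
    using H unfolding above_diag_def by blast+
  then show "S + sum_list zs = i + length zs \<and> (\<forall>k < length zs. i + k \<le> S + sum_list (take k zs))"
  proof (intro conjI allI impI)
    show "S + sum_list zs = i + length zs"
      using \<open>S - i + sum_list zs = length zs\<close> \<open>i \<le> S\<close> by linarith
    fix k assume "k < length zs"
    then have "k \<le> S - i + sum_list (take k zs)"
      by (intro bound) simp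
    then show "i + k \<le> S + sum_list (take k zs)"
      using \<open>i \<le> S\<close> by linarith
  qed
qed

lemma all_shifted_interval_iff:
  fixes i r :: nat
  shows "(\<forall>j. i \<le> j \<and> j < r \<longrightarrow> P j) \<longleftrightarrow> (\<forall>k < r - i. P (i + k))"
proof (intro iffI allI impI)
  fix j assume "\<forall>k < r - i. P (i + k)" and j: "i \<le> j \<and> j < r"
  moreover have "j - i < r - i"
    using j by (simp add: diff_less_mono)
  ultimately have "P (i + (j - i))"
    by blast
  then show "P j"
    using j by simp
qed simp

lemma admissible_append_Cons_iff:
  assumes ys: "Suc (length ys) = i" and zs: "length zs = r - i" and "i \<le> r"
  shows "admissible i r (ys @ n # zs) \<longleftrightarrow>
    below_diag ys \<and> i \<le> sum_list ys + n \<and> above_diag (sum_list ys + n - i) zs"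
proof -
  define xs where "xs = ys @ n # zs"
  define S where "S = sum_list ys + n"
  have "(\<forall>j. 1 \<le> j \<and> j < i \<longrightarrow> sum_list (take j xs) < j) \<longleftrightarrow> below_diag ys"
    using ys by (auto simp: below_diag_def xs_def sum_list_take_append_Cons)
  moreover have "sum_list (take (i + k) xs) = S + sum_list (take k zs)" for k
    unfolding xs_def S_def by (subst sum_list_take_append_Cons) (use ys in simp)
  then have "(\<forall>j. i \<le> j \<and> j < r \<longrightarrow> j \<le> sum_list (take j xs)) \<longleftrightarrow>
      (\<forall>k < length zs. i + k \<le> S + sum_list (take k zs))"
    using zs by (simp add: all_shifted_interval_iff)
  moreover have "sum_list xs = r \<longleftrightarrow> S + sum_list zs = i + length zs"
    using zs \<open>i \<le> r\<close> by (auto simp: xs_def S_def)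
  ultimately have "admissible i r xs \<longleftrightarrow> below_diag ys \<and>
      S + sum_list zs = i + length zs \<and> (\<forall>k < length zs. i + k \<le> S + sum_list (take k zs))"
    unfolding admissible_def by blast
  then show ?thesis
    unfolding above_diag_shift_iff xs_def S_def by blast
qed

lemma sum_group_by_value:
  fixes w :: "'a \<Rightarrow> 'b::semiring_0" and G :: "nat \<Rightarrow> 'b"
  assumes "\<And>x. x \<in> X \<Longrightarrow> P x \<Longrightarrow> h x \<le> K"
  shows "(\<Sum>x\<in>X. if P x then w x * G (h x) else 0) =
    (\<Sum>s=0..K. (\<Sum>x\<in>X. if P x \<and> h x = s then w x else 0) * G s)"
proof -
  have "(\<Sum>s=0..K. (\<Sum>x\<in>X. if P x \<and> h x = s then w x else 0) * G s) =
      (\<Sum>x\<in>X. \<Sum>s=0..K. if P x \<and> h x = s then w x * G s else 0)"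
    by (simp add: sum_distrib_right if_distrib[of "\<lambda>y. y * G _"] cong: if_cong) (rule sum.swap)
  also have "\<dots> = (\<Sum>x\<in>X. if P x then w x * G (h x) else 0)"
    using assms by (intro sum.cong refl) (simp add: sum.delta)
  finally show ?thesis ..
qed

lemma sum_above_diag_cut:
  "(\<Sum>n=0..r. \<Sum>zs\<in>blists r (r - i).
      if i \<le> s + n \<and> above_diag (s + n - i) zs then bcoef n * weight zs else 0) =
    (\<Sum>n=0..r. bcoef n * (if i \<le> s + n then beta (r - i) (s + n - i) else 0))"
proof (intro sum.cong refl)
  fix n
  show "(\<Sum>zs\<in>blists r (r - i).
      if i \<le> s + n \<and> above_diag (s + n - i) zs then bcoef n * weight zs else 0) =
    bcoef n * (if i \<le> s + n then beta (r - i) (s + n - i) else 0)"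
  proof (cases "i \<le> s + n")
    case True
    have "(\<Sum>zs\<in>blists r (r - i). if above_diag (s + n - i) zs then bcoef n * weight zs else 0) =
        bcoef n * above_diag_sum r (r - i) (s + n - i)"
      unfolding above_diag_sum_def sum_distrib_left by (intro sum.cong refl) simp
    then show ?thesis
      using True above_diag_sum_eq_beta[of "r - i" r] by simp
  qed simp
qed

lemma admissible_sum_eq:
  assumes "1 \<le> i" and "i \<le> r"
  shows "(\<Sum>xs\<in>blists r r. if admissible i r xs then weight xs else 0) =
    (\<Sum>s=0..i-1. alpha_rev (i-1) s *
       (\<Sum>n=0..r. bcoef n * (if i \<le> s + n then beta (r-i) (s+n-i) else 0)))"
proof -
  define G where "G s = (\<Sum>n=0..r. bcoef n * (if i \<le> s + n then beta (r-i) (s+n-i) else 0))" for s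
  have "blists r r = blists r ((i - 1) + Suc (r - i))"
    using assms by simp
  then have "(\<Sum>xs\<in>blists r r. if admissible i r xs then weight xs else 0) =
      (\<Sum>ys\<in>blists r (i-1). \<Sum>n=0..r. \<Sum>zs\<in>blists r (r-i).
        if admissible i r (ys @ n # zs) then weight (ys @ n # zs) else 0)"
    by (simp only: sum_blists_append_Cons)
  also have "\<dots> = (\<Sum>ys\<in>blists r (i-1). if below_diag ys then weight ys * G (sum_list ys) else 0)"
  proof (intro sum.cong refl)
    fix ys assume "ys \<in> blists r (i-1)"
    then have "Suc (length ys) = i"
      using assms by (simp add: blists_def)
    then have "(\<Sum>n=0..r. \<Sum>zs\<in>blists r (r-i).
        if admissible i r (ys @ n # zs) then weight (ys @ n # zs) else 0) =
      (\<Sum>n=0..r. \<Sum>zs\<in>blists r (r-i). if below_diag ys then weight ys *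
        (if i \<le> sum_list ys + n \<and> above_diag (sum_list ys + n - i) zs
         then bcoef n * weight zs else 0) else 0)"
      using assms by (intro sum.cong refl) (simp add: admissible_append_Cons_iff blists_def mult.assoc)
    also have "\<dots> = (if below_diag ys then weight ys * G (sum_list ys) else 0)"
      unfolding G_def sum_above_diag_cut[symmetric]
      by (simp add: sum_distrib_left if_distrib[of "\<lambda>y. weight ys * y"])
    finally show "(\<Sum>n=0..r. \<Sum>zs\<in>blists r (r-i).
        if admissible i r (ys @ n # zs) then weight (ys @ n # zs) else 0) =
      (if below_diag ys then weight ys * G (sum_list ys) else 0)" .
  qed
  also have "\<dots> = (\<Sum>s=0..i-1. below_diag_sum r (i-1) s * G s)"
    unfolding below_diag_sum_def
  proof (rule sum_group_by_value)
    fix ys assume "ys \<in> blists r (i-1)" and "below_diag ys"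
    then show "sum_list ys \<le> i - 1"
      using below_diag_sum_list_le[of ys] by (simp add: blists_def)
  qed
  also have "\<dots> = (\<Sum>s=0..i-1. alpha_rev (i-1) s * G s)"
    using below_diag_sum_eq_alpha_rev[of "i - 1" r] assms by simp
  finally show ?thesis
    unfolding G_def .
qed

lemma sum_list_take_map_upt:
  assumes "j \<le> r"
  shows "sum_list (take j (map n [1..<Suc r])) = (\<Sum>l=1..j. n l)"
proof -
  have "take j (map n [1..<Suc r]) = map n [1..<Suc j]"
    using assms by (simp add: take_map plus_1_eq_Suc del: upt_Suc)
  also have "sum_list \<dots> = sum n (set [1..<Suc j])"
    by (rule interv_sum_list_conv_sum_set_nat)
  also have "set [1..<Suc j] = {1..j}"
    by auto
  finally show ?thesis .
qed

lemma Sidx_iff_admissible: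
  fixes n :: "nat \<Rightarrow> nat"
  assumes supp: "\<forall>k. k \<notin> {1..r} \<longrightarrow> n k = 0" and "i \<le> r"
  shows "n \<in> Sidx i r \<longleftrightarrow> admissible i r (map n [1..<Suc r])"
proof -
  have suffix: "(\<Sum>l=j+1..r. n l) \<le> r - j \<longleftrightarrow> j \<le> (\<Sum>l=1..j. n l)"
    if "(\<Sum>l=1..r. n l) = r" and "j \<le> r" for j
  proof -
    have "(\<Sum>l=1..j + (r - j). n l) = (\<Sum>l=1..j. n l) + (\<Sum>l=j+1..j + (r - j). n l)"
      by (rule sum.ub_add_nat) simp
    then show ?thesis
      using that by simp arith
  qed
  define xs where "xs = map n [1..<Suc r]"
  have prefix: "sum_list (take j xs) = (\<Sum>l=1..j. n l)" if "j \<le> r" for j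
    unfolding xs_def using that by (rule sum_list_take_map_upt)
  have total: "sum_list xs = (\<Sum>l=1..r. n l)"
    using prefix[of r] by (simp add: xs_def)
  show ?thesis
  proof (cases "(\<Sum>l=1..r. n l) = r")
    case True
    have "(\<forall>j. 1 \<le> j \<and> j < i \<longrightarrow> (\<Sum>l=1..j. n l) < j) \<longleftrightarrow>
        (\<forall>j. 1 \<le> j \<and> j < i \<longrightarrow> sum_list (take j xs) < j)"
      using \<open>i \<le> r\<close> by (simp add: prefix)
    moreover have "(\<Sum>l=j+1..r. n l) \<le> r - j \<longleftrightarrow> j \<le> sum_list (take j xs)" if "j < r" for j
      using suffix[OF True] prefix that by simp
    then have "(\<forall>j. i \<le> j \<and> j < r \<longrightarrow> (\<Sum>l=j+1..r. n l) \<le> r - j) \<longleftrightarrow>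
        (\<forall>j. i \<le> j \<and> j < r \<longrightarrow> j \<le> sum_list (take j xs))"
      by blast
    ultimately show ?thesis
      unfolding Sidx_def admissible_def mem_Collect_eq xs_def[symmetric] total
      using supp True by blast
  qed (unfold Sidx_def admissible_def xs_def[symmetric], simp add: total)
qed

lemma Sidx_le: "n \<in> Sidx i r \<Longrightarrow> n k \<le> r"
  unfolding Sidx_def
  by (cases "k \<in> {1..r}") (auto intro: order_trans[OF member_le_sum[of k "{1..r}" n]])

lemma weight_map_upt: "weight (map n [1..<Suc r]) = (\<Prod>j=1..r. bern (n j) / fact (n j))"
proof -
  have "weight (map n [1..<Suc r]) = (\<Prod>j\<in>set [1..<Suc r]. bcoef (n j))"
    by (simp add: weight_def prod.distinct_set_conv_list comp_def del: upt_Suc set_upt)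
  also have "set [1..<Suc r] = {1..r}"
    by auto
  finally show ?thesis
    by (simp add: bern_div_fact bcoef_def)
qed

lemma Ccoef_eq_admissible_sum:
  assumes "i \<le> r"
  shows "Ccoef i r = (-1) ^ r * (\<Sum>xs\<in>blists r r. if admissible i r xs then weight xs else 0)"
proof -
  define tuple where "tuple xs = (\<lambda>k. if 1 \<le> k \<and> k \<le> r then xs ! (k - 1) else 0)"
    for xs :: "nat list"
  have "(\<Sum>n\<in>Sidx i r. \<Prod>j=1..r. bern (n j) / fact (n j)) =
      (\<Sum>xs\<in>{xs\<in>blists r r. admissible i r xs}. weight xs)"
  proof (rule sum.reindex_bij_witness[where i = tuple and j = "\<lambda>n. map n [1..<Suc r]"])
    fix n assume n: "n \<in> Sidx i r"
    then have supp: "\<forall>k. k \<notin> {1..r} \<longrightarrow> n k = 0"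
      by (simp add: Sidx_def)
    then show "tuple (map n [1..<Suc r]) = n"
      by (intro ext) (auto simp: tuple_def simp del: upt_Suc)
    show "map n [1..<Suc r] \<in> {xs\<in>blists r r. admissible i r xs}"
      using n Sidx_iff_admissible[OF supp assms] Sidx_le[OF n] by (auto simp: blists_def)
    show "weight (map n [1..<Suc r]) = (\<Prod>j=1..r. bern (n j) / fact (n j))"
      by (rule weight_map_upt)
  next
    fix xs assume xs: "xs \<in> {xs\<in>blists r r. admissible i r xs}"
    then have "length xs = r"
      by (simp add: blists_def)
    then have map: "map (tuple xs) [1..<Suc r] = xs"
      by (intro nth_equalityI) (auto simp: tuple_def simp del: upt_Suc)
    have "\<forall>k. k \<notin> {1..r} \<longrightarrow> tuple xs k = 0"
      by (simp add: tuple_def)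
    then show "tuple xs \<in> Sidx i r"
      using xs Sidx_iff_admissible[OF _ assms] map by simp
    show "map (tuple xs) [1..<Suc r] = xs"
      by (rule map)
  qed
  then show ?thesis
    by (simp add: Ccoef_def Cset_def sum.inter_filter)
qed

subsection \<open>The coefficients as coefficients of \<open>\<kappa>\<close>\<close>

definition bern_tail :: "nat \<Rightarrow> real fps" where
  "bern_tail g = fps_shift g bernoulli_gf oo L_fps"

definition kappa :: "nat \<Rightarrow> real fps" where
  "kappa p = fps_X * (D_fps * (\<Sum>g=0..p. fps_const (alpha p g) * bern_tail (Suc g)))"

lemma kappa_nth_0 [simp]: "kappa p $ 0 = 0"
  by (simp add: kappa_def)

lemma kappa_nth_Suc:
  "kappa p $ Suc q = (\<Sum>g=0..p. alpha p g * (\<Sum>k=0..q. bcoef (k + g + 1) * beta q k))"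
proof -
  have "(D_fps * bern_tail (Suc g)) $ q = (\<Sum>k=0..q. bcoef (k + g + 1) * beta q k)" for g
  proof -
    have "(D_fps * bern_tail (Suc g)) $ q =
        (\<Sum>k=0..q. (fps_shift (Suc g) bernoulli_gf) $ k * (L_fps ^ k * D_fps) $ q)"
      unfolding bern_tail_def mult.commute[of D_fps] by (rule fps_compose_mult_nth) simp
    then show ?thesis
      by (simp add: bcoef_def beta_def)
  qed
  moreover have "kappa p $ Suc q =
      (\<Sum>g=0..p. (fps_const (alpha p g) * (D_fps * bern_tail (Suc g))) $ q)"
    by (simp add: kappa_def sum_distrib_left fps_sum_nth mult.left_commute)
  ultimately show ?thesis
    by simp
qed

lemma sum_bcoef_beta_shift:
  assumes "g + 1 + q \<le> r"
  shows "(\<Sum>n=0..r. bcoef n * (if g + 1 \<le> n then beta q (n - g - 1) else 0)) =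
    (\<Sum>k=0..q. bcoef (k + g + 1) * beta q k)"
proof -
  have "(\<Sum>k=0..q. bcoef (k + g + 1) * beta q k) =
      (\<Sum>n=0 + (g + 1)..q + (g + 1). bcoef n * beta q (n - g - 1))"
    by (subst sum.shift_bounds_cl_nat_ivl) simp
  also have "\<dots> = (\<Sum>n=0..r. bcoef n * (if g + 1 \<le> n then beta q (n - g - 1) else 0))"
    using assms by (intro sum.mono_neutral_cong_left) (auto simp: beta_below)
  finally show ?thesis ..
qed

lemma Ccoef_eq_kappa:
  assumes "1 \<le> i" and "i \<le> r"
  shows "Ccoef i r = (-1) ^ r * kappa (i - 1) $ Suc (r - i)"
proof -
  define p where "p = i - 1"
  define q where "q = r - i"
  define F where "F s = alpha_rev p s *
    (\<Sum>n=0..r. bcoef n * (if i \<le> s + n then beta (r - i) (s + n - i) else 0))" for s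
  have "Ccoef i r = (-1) ^ r * (\<Sum>s=0..p. F s)"
    unfolding Ccoef_eq_admissible_sum[OF assms(2)] admissible_sum_eq[OF assms]
    by (simp add: F_def p_def)
  also have "(\<Sum>s=0..p. F s) = (\<Sum>g=0..p. F (p + 0 - g))"
    by (rule sum.atLeastAtMost_rev)
  also have "\<dots> = (\<Sum>g=0..p. alpha p g * (\<Sum>k=0..q. bcoef (k + g + 1) * beta q k))"
  proof (intro sum.cong refl)
    fix g assume g: "g \<in> {0..p}"
    have "(\<Sum>n=0..r. bcoef n * (if i \<le> (p - g) + n then beta (r - i) ((p - g) + n - i) else 0)) =
        (\<Sum>n=0..r. bcoef n * (if g + 1 \<le> n then beta q (n - g - 1) else 0))"
      using g assms by (intro sum.cong refl) (auto simp: p_def q_def)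
    also have "\<dots> = (\<Sum>k=0..q. bcoef (k + g + 1) * beta q k)"
      using g assms by (intro sum_bcoef_beta_shift) (simp add: p_def q_def)
    finally show "F (p + 0 - g) = alpha p g * (\<Sum>k=0..q. bcoef (k + g + 1) * beta q k)"
      using g by (simp add: F_def alpha_rev_def)
  qed
  finally show ?thesis
    by (simp add: kappa_nth_Suc p_def q_def)
qed

subsection \<open>Bivariate series\<close>

text \<open>A series in \<open>u\<close> and \<open>t\<close> is a series in \<open>u\<close> whose coefficients are series in \<open>t\<close>:
  \<open>fps_lift f\<close> is \<open>f(u)\<close>, \<open>fps_const f\<close> is \<open>f(t)\<close>, and \<open>fps_swap\<close> exchanges \<open>u\<close> and \<open>t\<close>.\<close>

definition fps_lift :: "'a::comm_ring_1 fps \<Rightarrow> 'a fps fps" where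
  "fps_lift f = Abs_fps (\<lambda>p. fps_const (f $ p))"

definition fps_swap :: "'a::comm_ring_1 fps fps \<Rightarrow> 'a fps fps" where
  "fps_swap Z = Abs_fps (\<lambda>a. Abs_fps (\<lambda>b. Z $ b $ a))"

lemma fps_const_sum: "fps_const (sum f S) = (\<Sum>x\<in>S. fps_const (f x))"
  by (induct S rule: infinite_finite_induct) (simp_all flip: fps_const_add)

lemma fps_lift_nth [simp]: "fps_lift f $ p = fps_const (f $ p)"
  by (simp add: fps_lift_def)

lemma fps_lift_mult: "fps_lift (f * g) = fps_lift f * fps_lift g"
  by (simp add: fps_eq_iff fps_mult_nth fps_const_sum)

lemma fps_lift_diff: "fps_lift (f - g) = fps_lift f - fps_lift g"
  by (simp add: fps_eq_iff)

lemma fps_lift_one: "fps_lift 1 = 1"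
  by (simp add: fps_eq_iff)

lemma fps_lift_X: "fps_lift fps_X = fps_X"
  by (simp add: fps_eq_iff fps_X_def)

lemma fps_swap_nth [simp]: "fps_swap Z $ a $ b = Z $ b $ a"
  by (simp add: fps_swap_def)

lemma fps_swap_diff: "fps_swap (Z - W) = fps_swap Z - fps_swap W"
  by (simp add: fps_eq_iff)

lemma fps_swap_lift: "fps_swap (fps_lift f) = fps_const f"
  by (simp add: fps_eq_iff)

lemma fps_swap_const: "fps_swap (fps_const f) = fps_lift f"
  by (simp add: fps_eq_iff)

lemma fps_swap_lift_mult: "fps_swap (fps_lift f * Z) = fps_const f * fps_swap Z"
proof (intro fps_ext)
  fix a b
  have "fps_swap (fps_lift f * Z) $ a $ b = (\<Sum>k=0..b. fps_const (f $ k) * Z $ (b - k)) $ a"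
    by (simp only: fps_swap_nth fps_mult_nth fps_lift_nth)
  also have "\<dots> = (\<Sum>k=0..b. f $ k * Z $ (b - k) $ a)"
    by (simp add: fps_sum_nth fps_mult_left_const_nth del: fps_mult_nth)
  also have "\<dots> = (fps_const f * fps_swap Z) $ a $ b"
    by (simp only: fps_mult_left_const_nth) (simp only: fps_mult_nth fps_swap_nth)
  finally show "fps_swap (fps_lift f * Z) $ a $ b = (fps_const f * fps_swap Z) $ a $ b" .
qed

lemma fps_swap_const_mult: "fps_swap (fps_const f * Z) = fps_lift f * fps_swap Z"
proof (intro fps_ext)
  fix a b
  have "fps_swap (fps_const f * Z) $ a $ b = (\<Sum>k=0..a. f $ k * Z $ b $ (a - k))"
    by (simp only: fps_swap_nth fps_mult_left_const_nth) (simp only: fps_mult_nth)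
  also have "\<dots> = (\<Sum>k=0..a. fps_const (f $ k) * fps_swap Z $ (a - k)) $ b"
    by (simp add: fps_sum_nth fps_mult_left_const_nth del: fps_mult_nth)
  also have "\<dots> = (fps_lift f * fps_swap Z) $ a $ b"
    by (simp only: fps_mult_nth fps_lift_nth)
  finally show "fps_swap (fps_const f * Z) $ a $ b = (fps_lift f * fps_swap Z) $ a $ b" .
qed

lemma fps_shift_eq_const_plus_X_shift:
  fixes f :: "'a::comm_ring_1 fps"
  shows "fps_shift g f = fps_const (f $ g) + fps_X * fps_shift (Suc g) f"
proof (intro fps_ext)
  fix n
  show "fps_shift g f $ n = (fps_const (f $ g) + fps_X * fps_shift (Suc g) f) $ n"
    by (cases n) simp_all
qed

lemma bern_tail_0: "bern_tail 0 = D_fps"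
  by (simp add: bern_tail_def bernoulli_gf_compose_L_fps)

lemma bern_tail_Suc: "bern_tail g = fps_const (bcoef g) + L_fps * bern_tail (Suc g)"
  unfolding bern_tail_def
  by (subst fps_shift_eq_const_plus_X_shift)
    (simp add: fps_compose_add_distrib fps_compose_mult_distrib bcoef_def)

definition E_fps :: "real fps" where
  "E_fps = fps_X * bern_tail 1"

lemma E_fps_nth_0 [simp]: "E_fps $ 0 = 0"
  by (simp add: E_fps_def)

lemma D_fps_mult_E_fps: "D_fps * E_fps = D_fps - 1"
proof -
  have "D_fps = 1 + D_fps * E_fps"
    using bern_tail_Suc[of 0] by (simp add: bern_tail_0 L_fps_eq E_fps_def mult_ac bcoef_def)
  then show ?thesis
    by (simp add: algebra_simps)
qed

definition S_series :: "real fps fps" where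
  "S_series = Abs_fps (\<lambda>p. \<Sum>g=0..p. fps_const (alpha p g) * bern_tail (Suc g))"

definition K_series :: "real fps fps" where
  "K_series = Abs_fps kappa"

lemma K_series_nth [simp]: "K_series $ p = kappa p"
  by (simp add: K_series_def)

lemma K_series_eq: "K_series = fps_const (fps_X * D_fps) * S_series"
  by (simp add: fps_eq_iff K_series_def S_series_def kappa_def mult.assoc)

lemma alpha_Suc: "alpha p (Suc g) = (\<Sum>k=0..p. L_fps $ k * alpha (p - k) g)"
  by (simp add: alpha_def fps_mult_nth)

lemma D_fps_nth_eq_sum_alpha: "D_fps $ p = (\<Sum>g=0..p. alpha p g * bcoef g)"
  by (simp add: bernoulli_gf_compose_L_fps[symmetric] fps_compose_nth alpha_def bcoef_def
      mult.commute del: bernoulli_gf_compose_L_fps)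

lemma S_series_nth:
  "p \<le> N \<Longrightarrow> S_series $ p = (\<Sum>g=0..N. fps_const (alpha p g) * bern_tail (Suc g))"
  unfolding S_series_def by (simp, rule sum.mono_neutral_left) (auto simp: alpha_below)

lemma fps_lift_L_fps_mult_S_series_nth:
  "(fps_lift L_fps * S_series) $ p = (\<Sum>g=0..p. fps_const (alpha p (Suc g)) * bern_tail (Suc g))"
proof -
  have "(fps_lift L_fps * S_series) $ p =
      (\<Sum>k=0..p. fps_const (L_fps $ k) * (\<Sum>g=0..p. fps_const (alpha (p - k) g) * bern_tail (Suc g)))"
    unfolding fps_mult_nth fps_lift_nth by (intro sum.cong refl) (simp add: S_series_nth)
  also have "\<dots> = (\<Sum>g=0..p. \<Sum>k=0..p. fps_const (L_fps $ k * alpha (p - k) g) * bern_tail (Suc g))"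
    by (simp add: sum_distrib_left mult.assoc[symmetric]) (rule sum.swap)
  finally show ?thesis
    by (simp add: alpha_Suc fps_const_sum sum_distrib_right)
qed

lemma fps_const_L_fps_mult_S_series_nth:
  "(fps_const L_fps * S_series) $ p =
    (\<Sum>g=0..p. fps_const (alpha p g) * bern_tail g) - (\<Sum>g=0..p. fps_const (alpha p g * bcoef g))"
proof -
  have "(fps_const L_fps * S_series) $ p =
      (\<Sum>g=0..p. fps_const (alpha p g) * (L_fps * bern_tail (Suc g)))"
    by (simp add: S_series_def sum_distrib_left mult.left_commute)
  also have "\<dots> = (\<Sum>g=0..p. fps_const (alpha p g) * bern_tail g - fps_const (alpha p g * bcoef g))"
    by (intro sum.cong refl) (subst (2) bern_tail_Suc, simp add: algebra_simps)
  finally show ?thesis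
    by (simp add: sum_subtractf)
qed

text \<open>The sum over \<open>g\<close> telescopes, which leaves only \<open>D(u) - D(t)\<close>.\<close>

lemma L_lift_diff_mult_S_series:
  "(fps_lift L_fps - fps_const L_fps) * S_series = fps_lift D_fps - fps_const D_fps"
proof (rule fps_ext)
  fix p
  have tel: "(\<Sum>g=0..p. fps_const (alpha p (Suc g)) * bern_tail (Suc g) - fps_const (alpha p g) * bern_tail g)
      = fps_const (alpha p (Suc p)) * bern_tail (Suc p) - fps_const (alpha p 0) * bern_tail 0"
    by (rule sum_Suc_diff) simp
  have "((fps_lift L_fps - fps_const L_fps) * S_series) $ p =
      (fps_lift L_fps * S_series) $ p - (fps_const L_fps * S_series) $ p"
    by (simp add: algebra_simps)
  also have "\<dots> = (\<Sum>g=0..p. fps_const (alpha p (Suc g)) * bern_tail (Suc g)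
        - fps_const (alpha p g) * bern_tail g) + (\<Sum>g=0..p. fps_const (alpha p g * bcoef g))"
    unfolding fps_lift_L_fps_mult_S_series_nth fps_const_L_fps_mult_S_series_nth
    by (simp add: sum_subtractf)
  also have "\<dots> = - (fps_const (alpha p 0) * D_fps) + fps_const (D_fps $ p)"
    unfolding tel by (simp add: alpha_below bern_tail_0 D_fps_nth_eq_sum_alpha fps_const_sum)
  finally show "((fps_lift L_fps - fps_const L_fps) * S_series) $ p = (fps_lift D_fps - fps_const D_fps) $ p"
    by (simp add: alpha_def)
qed

lemma K_series_mult_L_diff:
  "K_series * (fps_lift L_fps - fps_const L_fps) =
    fps_const fps_X * fps_const D_fps * (fps_lift D_fps - fps_const D_fps)"
proof -
  have "K_series * (fps_lift L_fps - fps_const L_fps) =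
      fps_const (fps_X * D_fps) * ((fps_lift L_fps - fps_const L_fps) * S_series)"
    by (simp add: K_series_eq mult_ac)
  then show ?thesis
    by (simp add: L_lift_diff_mult_S_series)
qed

text \<open>Since \<open>D (1 - E) = 1\<close>, the factors \<open>D(u)\<close> and \<open>D(t)\<close> are units, so the identity may be
  checked after multiplying by them.\<close>

lemma unit_factor_identity:
  fixes K u t Du Dt Eu Et :: "'a::comm_ring_1"
  assumes Eu: "Du * Eu = Du - 1" and Et: "Dt * Et = Dt - 1"
    and K: "K * (u * Du - t * Dt) = t * Dt * (Du - Dt)"
  shows "t * K - u * K - t * (Eu * K) + u * (Et * K) + t * (Dt * Eu) = t * (Dt - 1)"
proof -
  let ?lhs = "t * K - u * K - t * (Eu * K) + u * (Et * K) + t * (Dt * Eu)"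
  have "Du * Dt * ?lhs = K * (t * Du * Dt - u * Du * Dt) - t * Dt * K * (Du * Eu)
      + u * Du * K * (Dt * Et) + t * Dt * Dt * (Du * Eu)"
    by (simp add: algebra_simps)
  also have "\<dots> = - (K * (u * Du - t * Dt)) + t * Dt * Dt * (Du - 1)"
    by (simp add: Eu Et algebra_simps)
  also have "\<dots> = - (t * Dt * (Du - Dt)) + t * Dt * Dt * (Du - 1)"
    by (simp only: K)
  also have "\<dots> = Du * Dt * (t * (Dt - 1))"
    by (simp add: algebra_simps)
  finally have scaled: "Du * Dt * ?lhs = Du * Dt * (t * (Dt - 1))" .
  have units: "Du * (1 - Eu) = 1" "Dt * (1 - Et) = 1"
    using Eu Et by (simp_all add: right_diff_distrib)
  have "?lhs = (Du * (1 - Eu)) * (Dt * (1 - Et)) * ?lhs"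
    by (simp only: units mult_1_left)
  also have "\<dots> = (1 - Eu) * (1 - Et) * (Du * Dt * ?lhs)"
    by (simp only: mult_ac)
  also have "\<dots> = (Du * (1 - Eu)) * (Dt * (1 - Et)) * (t * (Dt - 1))"
    unfolding scaled by (simp only: mult_ac)
  finally show ?thesis
    by (simp only: units mult_1_left)
qed

lemma fps_lift_L_fps: "fps_lift L_fps = fps_X * fps_lift D_fps"
  by (simp add: L_fps_eq fps_lift_mult fps_lift_X)

lemma fps_const_L_fps: "fps_const L_fps = fps_const fps_X * fps_const D_fps"
  by (simp add: L_fps_eq)

lemma K_series_functional_eq:
  "fps_const fps_X * K_series - fps_X * K_series - fps_const fps_X * (fps_lift E_fps * K_series)
     + fps_X * (fps_const E_fps * K_series) + fps_const fps_X * (fps_const D_fps * fps_lift E_fps)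
   = fps_const fps_X * (fps_const D_fps - 1)"
proof (rule unit_factor_identity)
  show "fps_lift D_fps * fps_lift E_fps = fps_lift D_fps - 1"
    by (simp add: D_fps_mult_E_fps flip: fps_lift_mult fps_lift_diff fps_lift_one)
  have "fps_const D_fps * fps_const E_fps = fps_const (D_fps * E_fps)"
    by simp
  also have "\<dots> = fps_const D_fps - fps_const 1"
    by (simp only: D_fps_mult_E_fps fps_const_sub)
  finally show "fps_const D_fps * fps_const E_fps = fps_const D_fps - 1"
    by simp
  show "K_series * (fps_X * fps_lift D_fps - fps_const fps_X * fps_const D_fps) =
      fps_const fps_X * fps_const D_fps * (fps_lift D_fps - fps_const D_fps)"
    using K_series_mult_L_diff by (simp add: fps_lift_L_fps fps_const_L_fps)
qed

lemma kappa_coeff_identity: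
  assumes "1 \<le> p"
  shows "kappa p $ q - kappa (p - 1) $ Suc q - (\<Sum>j=0..p. E_fps $ j * kappa (p - j) $ q)
     + (\<Sum>j=0..Suc q. E_fps $ j * kappa (p - 1) $ (Suc q - j)) + D_fps $ q * E_fps $ p = 0"
proof -
  have t1: "(fps_const fps_X * K_series) $ p $ Suc q = kappa p $ q"
    by simp
  have t2: "(fps_X * K_series) $ p $ Suc q = kappa (p - 1) $ Suc q"
    using assms by simp
  have t3: "(fps_const fps_X * (fps_lift E_fps * K_series)) $ p $ Suc q =
      (\<Sum>j=0..p. E_fps $ j * kappa (p - j) $ q)"
    by (simp only: fps_mult_left_const_nth fps_X_mult_nth)
      (simp add: fps_mult_nth[of "fps_lift E_fps"] fps_sum_nth)
  have t4: "(fps_X * (fps_const E_fps * K_series)) $ p $ Suc q =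
      (\<Sum>j=0..Suc q. E_fps $ j * kappa (p - 1) $ (Suc q - j))"
    using assms by (simp only: fps_X_mult_nth fps_mult_left_const_nth) (simp add: fps_mult_nth[of E_fps])
  have t5: "(fps_const fps_X * (fps_const D_fps * fps_lift E_fps)) $ p $ Suc q = D_fps $ q * E_fps $ p"
    by simp
  have "(fps_const fps_X * (fps_const D_fps - 1)) $ p $ Suc q = 0"
    using assms by simp
  then show ?thesis
    using arg_cong[OF K_series_functional_eq, of "\<lambda>Z. Z $ p $ Suc q"]
    by (simp only: fps_add_nth fps_sub_nth t1 t2 t3 t4 t5)
qed

lemma diff_eq_of_functional_eqs:
  fixes K Z u t Du Dt :: "'a::idom"
  assumes K: "K * (u * Du - t * Dt) = t * Dt * (Du - Dt)"
    and Z: "(t * Dt - u * Du) * Z = u * Du * (Dt - Du)"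
    and "u * Du \<noteq> t * Dt"
  shows "K - Z = Dt - Du"
proof -
  have "(K - Z - (Dt - Du)) * (u * Du - t * Dt) =
      K * (u * Du - t * Dt) + (t * Dt - u * Du) * Z - (Dt - Du) * (u * Du - t * Dt)"
    by (simp add: algebra_simps)
  also have "\<dots> = t * Dt * (Du - Dt) + u * Du * (Dt - Du) - (Dt - Du) * (u * Du - t * Dt)"
    by (simp only: K Z)
  also have "\<dots> = 0"
    by (simp add: algebra_simps)
  finally show ?thesis
    using assms(3) by simp
qed

lemma K_series_minus_swap: "K_series - fps_swap K_series = fps_const D_fps - fps_lift D_fps"
proof (rule diff_eq_of_functional_eqs)
  show K: "K_series * (fps_X * fps_lift D_fps - fps_const fps_X * fps_const D_fps) =
      fps_const fps_X * fps_const D_fps * (fps_lift D_fps - fps_const D_fps)"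
    using K_series_mult_L_diff by (simp add: fps_lift_L_fps fps_const_L_fps)
  have "fps_lift L_fps * K_series - fps_const L_fps * K_series =
      fps_const (fps_X * D_fps) * (fps_lift D_fps - fps_const D_fps)"
    using K_series_mult_L_diff by (simp add: algebra_simps)
  then have "fps_const L_fps * fps_swap K_series - fps_lift L_fps * fps_swap K_series =
      fps_lift (fps_X * D_fps) * (fps_const D_fps - fps_lift D_fps)"
    by (metis fps_swap_diff fps_swap_lift_mult fps_swap_const_mult fps_swap_lift fps_swap_const)
  then show "(fps_const fps_X * fps_const D_fps - fps_X * fps_lift D_fps) * fps_swap K_series =
      fps_X * fps_lift D_fps * (fps_const D_fps - fps_lift D_fps)"
    by (simp add: fps_lift_L_fps fps_const_L_fps fps_lift_mult fps_lift_X algebra_simps)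
  have "(fps_X * fps_lift D_fps) $ 1 $ 0 \<noteq> (fps_const fps_X * fps_const D_fps) $ 1 $ 0"
    by simp
  then show "fps_X * fps_lift D_fps \<noteq> fps_const fps_X * fps_const D_fps"
    by metis
qed

lemma kappa_nth_swap:
  "kappa a $ b = kappa b $ a + (if a = 0 then D_fps $ b else 0) - (if b = 0 then D_fps $ a else 0)"
  using arg_cong[OF K_series_minus_swap, of "\<lambda>Z. Z $ a $ b"]
  by (cases "a = 0"; cases "b = 0") (simp_all add: algebra_simps)

lemma kappa_nth_1: "1 \<le> m \<Longrightarrow> kappa (m - 1) $ 1 = E_fps $ m"
proof -
  assume "1 \<le> m"
  have "kappa (m - 1) $ Suc 0 = (\<Sum>g=0..m-1. alpha (m-1) g * bcoef (g + 1))"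
    by (simp add: kappa_nth_Suc beta_def)
  also have "\<dots> = bern_tail 1 $ (m - 1)"
    by (simp add: bern_tail_def fps_compose_nth bcoef_def alpha_def mult.commute)
  also have "\<dots> = E_fps $ m"
    using \<open>1 \<le> m\<close> by (simp add: E_fps_def)
  finally show ?thesis
    by simp
qed

lemma kappa_0: "kappa 0 = D_fps - 1"
  using D_fps_mult_E_fps by (simp add: kappa_def alpha_def E_fps_def mult_ac)

lemma Ccoef_diag: "1 \<le> m \<Longrightarrow> Ccoef m m = (-1) ^ m * E_fps $ m"
  using Ccoef_eq_kappa[of m m] kappa_nth_1[of m] by simp

lemma Ccoef_1: "1 \<le> r \<Longrightarrow> Ccoef 1 r = (-1) ^ r / (r + 1)"
  using Ccoef_eq_kappa[of 1 r] by (simp add: kappa_0 D_fps_def divide_inverse)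

subsection \<open>The recursion\<close>

lemma sum_atLeast0_atMost_ends:
  fixes f :: "nat \<Rightarrow> 'a::comm_monoid_add"
  assumes "1 \<le> n"
  shows "(\<Sum>j=0..n. f j) = f 0 + (\<Sum>j=1..n-1. f j) + f n"
proof -
  obtain m where n: "n = Suc m"
    using assms by (cases n) auto
  have "(\<Sum>j=0..m. f j) = f 0 + (\<Sum>j=Suc 0..m. f j)"
    by (rule sum.atLeast_Suc_atMost) simp
  then show ?thesis
    by (simp add: n)
qed

lemma kappa_recurrence:
  assumes "1 \<le> p" and "1 \<le> q"
  shows "kappa p $ q = kappa (p - 1) $ Suc q + (\<Sum>j=1..p-1. kappa q $ (p - j) * E_fps $ j)
    - (\<Sum>j=1..q. kappa (p - 1) $ (Suc q - j) * E_fps $ j)"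
proof -
  have "(\<Sum>j=1..p-1. E_fps $ j * kappa (p - j) $ q) = (\<Sum>j=1..p-1. kappa q $ (p - j) * E_fps $ j)"
    using assms by (intro sum.cong refl) (subst kappa_nth_swap, auto)
  moreover have "kappa 0 $ q = D_fps $ q"
    using assms by (simp add: kappa_0)
  ultimately have "(\<Sum>j=0..p. E_fps $ j * kappa (p - j) $ q) =
      (\<Sum>j=1..p-1. kappa q $ (p - j) * E_fps $ j) + E_fps $ p * D_fps $ q"
    using sum_atLeast0_atMost_ends[OF assms(1), of "\<lambda>j. E_fps $ j * kappa (p - j) $ q"] by simp
  moreover have "(\<Sum>j=0..Suc q. E_fps $ j * kappa (p - 1) $ (Suc q - j)) =
      (\<Sum>j=1..q. kappa (p - 1) $ (Suc q - j) * E_fps $ j)"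
    using sum_atLeast0_atMost_ends[of "Suc q" "\<lambda>j. E_fps $ j * kappa (p - 1) $ (Suc q - j)"]
    by (simp add: mult.commute)
  ultimately show ?thesis
    using kappa_coeff_identity[OF assms(1), of q] by simp
qed

lemma sum_reflect:
  fixes a b r :: nat
  assumes "a \<le> r" and "b \<le> r"
  shows "(\<Sum>k=a..b. f k) = (\<Sum>j=r-b..r-a. f (r - j))"
  by (rule sum.reindex_bij_witness[where i = "\<lambda>j. r - j" and j = "\<lambda>k. r - k"]) (use assms in auto)

lemma Ccoef_mult_Ccoef_diag:
  assumes "1 \<le> a" and "a \<le> k" and "k < r"
  shows "Ccoef a k * Ccoef (r - k) (r - k) = (-1) ^ r * (kappa (a - 1) $ Suc (k - a) * E_fps $ (r - k))"
proof -
  have "Ccoef a k = (-1) ^ k * kappa (a - 1) $ Suc (k - a)"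
    using assms by (simp add: Ccoef_eq_kappa)
  moreover have "Ccoef (r - k) (r - k) = (-1) ^ (r - k) * E_fps $ (r - k)"
    using assms by (intro Ccoef_diag) simp
  ultimately have "Ccoef a k * Ccoef (r - k) (r - k) =
      ((-1) ^ k * (-1) ^ (r - k)) * (kappa (a - 1) $ Suc (k - a) * E_fps $ (r - k))"
    by (simp only: mult_ac)
  also have "(-1) ^ k * (-1) ^ (r - k) = ((-1) ^ r :: real)"
    using assms by (simp flip: power_add)
  finally show ?thesis .
qed

lemma sum_Ccoef_upper:
  assumes "1 \<le> i" and "i < r"
  shows "(\<Sum>k=r-i+1..r-1. Ccoef (r-i+1) k * Ccoef (r-k) (r-k)) =
    (-1) ^ r * (\<Sum>j=1..i-1. kappa (r - i) $ (i - j) * E_fps $ j)"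
proof -
  have "(\<Sum>k=r-i+1..r-1. Ccoef (r-i+1) k * Ccoef (r-k) (r-k)) =
      (-1) ^ r * (\<Sum>k=r-i+1..r-1. kappa (r - i) $ (k - (r - i)) * E_fps $ (r - k))"
    unfolding sum_distrib_left
  proof (intro sum.cong refl)
    fix k assume k: "k \<in> {r-i+1..r-1}"
    then have index: "Suc (k - (r - i + 1)) = k - (r - i)"
      by (simp add: Suc_diff_Suc)
    have "k < r"
      using k assms by auto
    then show "Ccoef (r-i+1) k * Ccoef (r-k) (r-k) =
        (-1) ^ r * (kappa (r - i) $ (k - (r - i)) * E_fps $ (r - k))"
      using k index Ccoef_mult_Ccoef_diag[of "r-i+1" k r] by simp
  qed
  also have "(\<Sum>k=r-i+1..r-1. kappa (r - i) $ (k - (r - i)) * E_fps $ (r - k)) =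
      (\<Sum>j=r-(r-1)..r-(r-i+1). kappa (r - i) $ ((r - j) - (r - i)) * E_fps $ (r - (r - j)))"
    using assms by (intro sum_reflect) auto
  also have "\<dots> = (\<Sum>j=1..i-1. kappa (r - i) $ (i - j) * E_fps $ j)"
    using assms by (intro sum.cong) auto
  finally show ?thesis .
qed

lemma sum_Ccoef_lower:
  assumes "1 \<le> i" and "i < r"
  shows "(\<Sum>k=i..r-1. Ccoef i k * Ccoef (r-k) (r-k)) =
    (-1) ^ r * (\<Sum>j=1..r-i. kappa (i - 1) $ (Suc (r - i) - j) * E_fps $ j)"
proof -
  have "(\<Sum>k=i..r-1. Ccoef i k * Ccoef (r-k) (r-k)) =
      (-1) ^ r * (\<Sum>k=i..r-1. kappa (i - 1) $ Suc (k - i) * E_fps $ (r - k))"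
    unfolding sum_distrib_left
    using assms by (intro sum.cong refl Ccoef_mult_Ccoef_diag) auto
  also have "(\<Sum>k=i..r-1. kappa (i - 1) $ Suc (k - i) * E_fps $ (r - k)) =
      (\<Sum>j=r-(r-1)..r-i. kappa (i - 1) $ Suc ((r - j) - i) * E_fps $ (r - (r - j)))"
    using assms by (intro sum_reflect) auto
  also have "\<dots> = (\<Sum>j=1..r-i. kappa (i - 1) $ (Suc (r - i) - j) * E_fps $ j)"
    using assms by (intro sum.cong) (auto simp: Suc_diff_le add.commute)
  finally show ?thesis .
qed

lemma Ccoef_Suc:
  assumes "1 \<le> i" and "i < r"
  shows "Ccoef (i+1) r = Ccoef i r
    + (\<Sum>k=r-i+1..r-1. Ccoef (r-i+1) k * Ccoef (r-k) (r-k))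
    - (\<Sum>k=i..r-1. Ccoef i k * Ccoef (r-k) (r-k))"
proof -
  have lhs: "Ccoef (i+1) r = (-1) ^ r * kappa i $ (r - i)"
    using assms Ccoef_eq_kappa[of "i+1" r] by (simp add: Suc_diff_Suc)
  have rhs: "Ccoef i r = (-1) ^ r * kappa (i - 1) $ Suc (r - i)"
    using assms by (simp add: Ccoef_eq_kappa)
  have "kappa i $ (r - i) = kappa (i - 1) $ Suc (r - i)
      + (\<Sum>j=1..i-1. kappa (r - i) $ (i - j) * E_fps $ j)
      - (\<Sum>j=1..r-i. kappa (i - 1) $ (Suc (r - i) - j) * E_fps $ j)"
    using assms by (intro kappa_recurrence) auto
  then have "(-1) ^ r * kappa i $ (r - i) = (-1) ^ r * (kappa (i - 1) $ Suc (r - i)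
      + (\<Sum>j=1..i-1. kappa (r - i) $ (i - j) * E_fps $ j)
      - (\<Sum>j=1..r-i. kappa (i - 1) $ (Suc (r - i) - j) * E_fps $ j))"
    by (rule arg_cong)
  then show ?thesis
    unfolding lhs rhs sum_Ccoef_upper[OF assms] sum_Ccoef_lower[OF assms]
    by (simp add: algebra_simps)
qed

theorem theorem3p2:
  shows "(\<forall>i r. 1 \<le> i \<and> i < r \<longrightarrow>
            Ccoef (i+1) r = Ccoef i r
              + (\<Sum>k=r-i+1..r-1. Ccoef (r-i+1) k * Ccoef (r-k) (r-k))
              - (\<Sum>k=i..r-1. Ccoef i k * Ccoef (r-k) (r-k)))
       \<and> (\<forall>r. 1 \<le> r \<longrightarrow> Ccoef 1 r = (-1) ^ r / (r + 1))"
  using Ccoef_Suc Ccoef_1 by blast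

end
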